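(* Let $\alpha\ge 1$. Suppose that every canonical instance admits an $\alpha$-WMMS allocation. Then every chore-allocation instance (with positive weights and nonnegative additive cost functions) admits a $4\alpha$-WMMS allocation.
   Context: A chore-allocation instance consists of a set $\mathcal N=\{a_1,\dots,a_n\}$ of agents, a finite set $\mathcal M=\{e_1,\dots,e_m\}$ of indivisible items (chores), positive weights $w_1,\dots,w_n$, and additive cost functions $v_i:2^{\mathcal M}\to\mathbb R_{\ge 0}$, i.e. $v_i(S)=\sum_{e\in S}v_i(e)$. An allocation is an ordered partition $(A_1,\dots,A_n)$ of $\mathcal M$ (bundles may be empty); $\mathcal A$ denotes the set of all allocations. The weighted maximin share of agent $a_i$ is $\mathsf{WMMS}_i=w_i\cdot\min_{(A_1,\dots,A_n)\in\mathcal A}\max_{j\in[n]}\frac{v_i(A_j)}{w_j}$. For $\alpha\ge1$, an allocation $(A_1,\dots,A_n)$ is $\alpha$-WMMS if $v_i(A_i)\le\alpha\cdot\mathsf{WMMS}_i$ for every agent $a_i$. An instance is canonical if: (i) agents are indexed so that $w_1\ge w_2\ge\cdots\ge w_n$, $\sum_i w_i=1$, and every $w_i=w_1/2^p$ for some nonnegative integer $p$; (ii) $v_i(\mathcal M)=1$ for every agent, and for every agent $a_i$ and item $e$, $v_i(e)$ is either $0$ or equal to $w_1/2^p$ for some nonnegative integer $p$; (iii) (identical ordering) $v_i(e_1)\ge v_i(e_2)\ge\cdots\ge v_i(e_m)$ for every agent $a_i$; (iv) $\mathsf{WMMS}_i=w_i$ for every agent $a_i$. *)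

theory Defs
  imports Complex_Main "HOL-Library.Disjoint_Sets"
begin

text \<open>Agents are a_1..a_n, represented by indices 0..<n (a_{i+1} is index i);
  items e_1..e_m are represented by indices 0..<m. Weights w :: nat => real,
  costs v i e = v_i(e_{e+1}).\<close>

definition chore_instance :: "nat \<Rightarrow> nat \<Rightarrow> (nat \<Rightarrow> real) \<Rightarrow> (nat \<Rightarrow> nat \<Rightarrow> real) \<Rightarrow> bool" where
  "chore_instance n m w v \<longleftrightarrow> n \<ge> 1 \<and> (\<forall>i<n. w i > 0) \<and> (\<forall>i<n. \<forall>e<m. v i e \<ge> 0)"

definition cost :: "(nat \<Rightarrow> nat \<Rightarrow> real) \<Rightarrow> nat \<Rightarrow> nat set \<Rightarrow> real" where
  "cost v i S = (\<Sum>e\<in>S. v i e)"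

text \<open>An allocation is an ordered partition (A_0,...,A_{n-1}) of the items {0..<m}
  (bundles may be empty); bundles of non-agents are fixed to be empty.\<close>
definition allocation :: "nat \<Rightarrow> nat \<Rightarrow> (nat \<Rightarrow> nat set) \<Rightarrow> bool" where
  "allocation n m A \<longleftrightarrow> (\<forall>j<n. A j \<subseteq> {..<m}) \<and> (\<Union>j<n. A j) = {..<m}
     \<and> disjoint_family_on A {..<n} \<and> (\<forall>j\<ge>n. A j = {})"

definition allocations :: "nat \<Rightarrow> nat \<Rightarrow> (nat \<Rightarrow> nat set) set" where
  "allocations n m = {A. allocation n m A}"

definition wmms :: "nat \<Rightarrow> nat \<Rightarrow> (nat \<Rightarrow> real) \<Rightarrow> (nat \<Rightarrow> nat \<Rightarrow> real) \<Rightarrow> nat \<Rightarrow> real" where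
  "wmms n m w v i = w i * Min ((\<lambda>A. Max ((\<lambda>j. cost v i (A j) / w j) ` {..<n})) ` allocations n m)"

definition is_alpha_wmms :: "nat \<Rightarrow> nat \<Rightarrow> (nat \<Rightarrow> real) \<Rightarrow> (nat \<Rightarrow> nat \<Rightarrow> real) \<Rightarrow> real \<Rightarrow> (nat \<Rightarrow> nat set) \<Rightarrow> bool" where
  "is_alpha_wmms n m w v \<alpha> A \<longleftrightarrow> allocation n m A \<and> (\<forall>i<n. cost v i (A i) \<le> \<alpha> * wmms n m w v i)"

definition canonical :: "nat \<Rightarrow> nat \<Rightarrow> (nat \<Rightarrow> real) \<Rightarrow> (nat \<Rightarrow> nat \<Rightarrow> real) \<Rightarrow> bool" where
  "canonical n m w v \<longleftrightarrow> chore_instance n m w v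
     \<and> (\<forall>i j. i \<le> j \<and> j < n \<longrightarrow> w j \<le> w i)
     \<and> (\<Sum>i<n. w i) = 1
     \<and> (\<forall>i<n. \<exists>p::nat. w i = w 0 / 2 ^ p)
     \<and> (\<forall>i<n. cost v i {..<m} = 1)
     \<and> (\<forall>i<n. \<forall>e<m. v i e = 0 \<or> (\<exists>p::nat. v i e = w 0 / 2 ^ p))
     \<and> (\<forall>i<n. \<forall>e e'. e \<le> e' \<and> e' < m \<longrightarrow> v i e' \<le> v i e)
     \<and> (\<forall>i<n. wmms n m w v i = w i)"

end

theory Submission
  imports Defs
begin

text \<open>Since WMMS values are invariant under relabelling the agents, we may assume the weights
  to be sorted. Rounding the weights to powers of two changes their ratios by at most a factor 2.
  For each agent we take an optimal WMMS partition and rescale the agent's costs so that bundle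
  \<open>l\<close> costs at most half of the new weight \<open>w'\<^sub>l\<close>; rounding item costs up to powers of
  two (at most doubling them) and adding dummy items then yields bundles of cost exactly
  \<open>w'\<^sub>l\<close>. After sorting every agent's costs this is a canonical instance. An \<open>\<alpha>\<close>-WMMS
  allocation of it is pulled back along a matching that replaces the item of rank \<open>t\<close> by an
  original item whose rescaled cost is at most the \<open>t\<close>-th largest canonical cost; undoing the
  two factors of 2 gives \<open>4\<alpha>\<close>.\<close>

section \<open>Allocations\<close>

lemma allocationD:
  assumes "allocation n m A"
  shows allocation_Union: "(\<Union>j<n. A j) = {..<m}"
    and allocation_disjoint: "disjoint_family_on A {..<n}"
    and allocation_empty_bundle: "n \<le> j \<Longrightarrow> A j = {}"
  using assms unfolding allocation_def by blast+

lemma allocation_bundle_subset: "allocation n m A \<Longrightarrow> A j \<subseteq> {..<m}"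
  using allocation_empty_bundle unfolding allocation_def by (metis empty_subsetI not_le)

lemma allocationI:
  assumes "(\<Union>j<n. A j) = {..<m}" "disjoint_family_on A {..<n}" "\<And>j. n \<le> j \<Longrightarrow> A j = {}"
  shows "allocation n m A"
  using assms unfolding allocation_def by blast

lemma finite_allocation_bundle:
  assumes "allocation n m A"
  shows "finite (A j)"
  using allocation_bundle_subset[OF assms] by (rule finite_subset) simp

lemma sum_over_allocation:
  assumes "allocation n m A"
  shows "(\<Sum>j<n. sum f (A j)) = sum f {..<m}"
  unfolding allocation_Union[OF assms, symmetric]
  using allocation_disjoint[OF assms] finite_allocation_bundle[OF assms]
  by (intro sum.UNION_disjoint_family[symmetric]) simp_all

definition owner :: "nat \<Rightarrow> (nat \<Rightarrow> nat set) \<Rightarrow> nat \<Rightarrow> nat" where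
  "owner n A e = (THE j. j < n \<and> e \<in> A j)"

lemma owner_eq:
  assumes "allocation n m A" "j < n" "e \<in> A j"
  shows "owner n A e = j"
  unfolding owner_def
proof (rule the_equality)
  show "j' = j" if "j' < n \<and> e \<in> A j'" for j'
    using that assms allocation_disjoint[OF assms(1)] unfolding disjoint_family_on_def by blast
qed (use assms in simp)

lemma owner_mem:
  assumes "allocation n m A" "e < m"
  shows "owner n A e < n" "e \<in> A (owner n A e)"
proof -
  obtain j where "j < n" "e \<in> A j"
    using assms allocation_Union[OF assms(1)] by blast
  then show "owner n A e < n" "e \<in> A (owner n A e)"
    using owner_eq[OF assms(1)] by auto
qed

definition owner_allocation :: "nat \<Rightarrow> nat \<Rightarrow> (nat \<Rightarrow> nat) \<Rightarrow> nat \<Rightarrow> nat set" where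
  "owner_allocation n m f j = (if j < n then {e. e < m \<and> f e = j} else {})"

lemma allocation_owner_allocation:
  "(\<And>e. e < m \<Longrightarrow> f e < n) \<Longrightarrow> allocation n m (owner_allocation n m f)"
  by (rule allocationI) (auto simp: owner_allocation_def disjoint_family_on_def)

lemma allocation_to_first_agent: "0 < n \<Longrightarrow> allocation n m (owner_allocation n m (\<lambda>_. 0))"
  by (rule allocation_owner_allocation) simp

lemma allocation_image:
  assumes \<phi>: "bij_betw \<phi> {..<m} {..<m}" and A: "allocation n m A"
  shows "allocation n m (\<lambda>j. \<phi> ` A j)"
proof (rule allocationI)
  have "(\<Union>j<n. \<phi> ` A j) = \<phi> ` (\<Union>j<n. A j)" by blast
  then show "(\<Union>j<n. \<phi> ` A j) = {..<m}"
    using \<phi> allocation_Union[OF A] by (simp add: bij_betw_def)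
  show "disjoint_family_on (\<lambda>j. \<phi> ` A j) {..<n}"
    unfolding disjoint_family_on_def
  proof (intro ballI impI)
    fix i j assume "i \<in> {..<n}" "j \<in> {..<n}" "i \<noteq> j"
    then have "A i \<inter> A j = {}"
      using allocation_disjoint[OF A] by (simp add: disjoint_family_on_def)
    moreover have "A i \<union> A j \<subseteq> {..<m}"
      using allocation_bundle_subset[OF A] by simp
    then have "inj_on \<phi> (A i \<union> A j)"
      using \<phi> by (meson bij_betw_def inj_on_subset)
    ultimately show "\<phi> ` A i \<inter> \<phi> ` A j = {}"
      by (metis image_empty inj_on_image_Int sup_ge1 sup_ge2)
  qed
qed (simp add: allocation_empty_bundle[OF A])

lemma allocation_restrict:
  assumes A: "allocation n M A" and "m \<le> M"
  shows "allocation n m (\<lambda>j. A j \<inter> {..<m})"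
proof (rule allocationI)
  have "(\<Union>j<n. A j \<inter> {..<m}) = (\<Union>j<n. A j) \<inter> {..<m}" by blast
  then show "(\<Union>j<n. A j \<inter> {..<m}) = {..<m}"
    using allocation_Union[OF A] \<open>m \<le> M\<close> by auto
  show "disjoint_family_on (\<lambda>j. A j \<inter> {..<m}) {..<n}"
    using allocation_disjoint[OF A] unfolding disjoint_family_on_def by blast
qed (simp add: allocation_empty_bundle[OF A])

definition permute_agents :: "nat \<Rightarrow> (nat \<Rightarrow> nat) \<Rightarrow> (nat \<Rightarrow> nat set) \<Rightarrow> nat \<Rightarrow> nat set" where
  "permute_agents n \<pi> A j = (if j < n then A (\<pi> j) else {})"

lemma allocation_permute_agents:
  assumes \<pi>: "bij_betw \<pi> {..<n} {..<n}" and A: "allocation n m A"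
  shows "allocation n m (permute_agents n \<pi> A)"
proof (rule allocationI)
  have "(\<Union>j<n. permute_agents n \<pi> A j) = (\<Union>j\<in>\<pi> ` {..<n}. A j)"
    unfolding permute_agents_def by simp
  also have "\<pi> ` {..<n} = {..<n}"
    using \<pi> by (simp add: bij_betw_def)
  finally show "(\<Union>j<n. permute_agents n \<pi> A j) = {..<m}"
    using allocation_Union[OF A] by simp
  show "disjoint_family_on (permute_agents n \<pi> A) {..<n}"
    unfolding disjoint_family_on_def
  proof (intro ballI impI)
    fix i j assume ij: "i \<in> {..<n}" "j \<in> {..<n}" "i \<noteq> j"
    then have "\<pi> i \<in> {..<n}" "\<pi> j \<in> {..<n}" "\<pi> i \<noteq> \<pi> j"
      using \<pi> unfolding bij_betw_def inj_on_def by auto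
    then show "permute_agents n \<pi> A i \<inter> permute_agents n \<pi> A j = {}"
      using allocation_disjoint[OF A] ij unfolding disjoint_family_on_def permute_agents_def by simp
  qed
qed (simp add: permute_agents_def)

lemma finite_allocations: "finite (allocations n m)"
proof -
  have "allocations n m \<subseteq> (\<lambda>B j. if j < n then B j else {}) ` (Pi\<^sub>E {..<n} (\<lambda>_. Pow {..<m}))"
  proof
    fix A assume "A \<in> allocations n m"
    then have A: "allocation n m A" by (simp add: allocations_def)
    have "A = (\<lambda>j. if j < n then restrict A {..<n} j else {})"
      using allocation_empty_bundle[OF A] by (auto simp: fun_eq_iff)
    moreover have "restrict A {..<n} \<in> Pi\<^sub>E {..<n} (\<lambda>_. Pow {..<m})"
      using allocation_bundle_subset[OF A] by simp
    ultimately show "A \<in> (\<lambda>B j. if j < n then B j else {}) ` (Pi\<^sub>E {..<n} (\<lambda>_. Pow {..<m}))"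
      by blast
  qed
  then show ?thesis
    by (rule finite_subset) (simp add: finite_PiE)
qed

section \<open>Weighted maximin shares\<close>

lemma chore_instanceD:
  assumes "chore_instance n m w v"
  shows "0 < n" "i < n \<Longrightarrow> 0 < w i" "i < n \<Longrightarrow> e < m \<Longrightarrow> 0 \<le> v i e"
  using assms unfolding chore_instance_def by auto

lemma cost_nonneg:
  assumes "chore_instance n m w v" "i < n" "S \<subseteq> {..<m}"
  shows "0 \<le> cost v i S"
  using assms unfolding chore_instance_def cost_def by (intro sum_nonneg) auto

lemma wmms_attained:
  assumes ci: "chore_instance n m w v" and i: "i < n"
  obtains \<mu> P where "wmms n m w v i = w i * \<mu>" "0 \<le> \<mu>" "allocation n m P"
    "\<And>j. j < n \<Longrightarrow> cost v i (P j) \<le> \<mu> * w j"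
proof -
  define F where "F A = Max ((\<lambda>j. cost v i (A j) / w j) ` {..<n})" for A
  define \<mu> where "\<mu> = Min (F ` allocations n m)"
  have n: "0 < n" and w: "\<And>j. j < n \<Longrightarrow> 0 < w j"
    using ci unfolding chore_instance_def by auto
  have "\<mu> \<in> F ` allocations n m"
    unfolding \<mu>_def using finite_allocations allocation_to_first_agent[OF n]
    by (intro Min_in) (auto simp: allocations_def)
  then obtain P where P: "allocation n m P" and \<mu>P: "\<mu> = F P"
    by (auto simp: allocations_def)
  have le: "cost v i (P j) / w j \<le> \<mu>" if "j < n" for j
    unfolding \<mu>P F_def using that by (intro Max_ge) auto
  have "0 \<le> cost v i (P 0) / w 0"
    using cost_nonneg[OF ci i allocation_bundle_subset[OF P]] w[OF n] by simp
  then have "0 \<le> \<mu>"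
    using le[OF n] by linarith
  moreover have "cost v i (P j) \<le> \<mu> * w j" if "j < n" for j
    using le[OF that] w[OF that] by (simp add: divide_le_eq)
  ultimately show thesis
    using that P unfolding wmms_def \<mu>_def F_def by blast
qed

lemma wmms_nonneg:
  assumes "chore_instance n m w v" "i < n"
  shows "0 \<le> wmms n m w v i"
proof -
  obtain \<mu> where "wmms n m w v i = w i * \<mu>" "0 \<le> \<mu>"
    using wmms_attained[OF assms] by metis
  then show ?thesis
    using chore_instanceD(2)[OF assms] by simp
qed

lemma item_cost_zero_if_wmms_zero:
  assumes ci: "chore_instance n m w v" and i: "i < n" and zero: "wmms n m w v i = 0" and e: "e < m"
  shows "v i e = 0"
proof -
  obtain \<mu> P where \<mu>: "wmms n m w v i = w i * \<mu>" and P: "allocation n m P"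
    and bundles: "\<And>j. j < n \<Longrightarrow> cost v i (P j) \<le> \<mu> * w j"
    using wmms_attained[OF ci i] by metis
  have "\<mu> = 0"
    using \<mu> zero chore_instanceD(2)[OF ci i] by simp
  let ?j = "owner n P e"
  have "v i e \<le> cost v i (P ?j)"
    unfolding cost_def
    using owner_mem[OF P e] allocation_bundle_subset[OF P, of ?j] finite_allocation_bundle[OF P]
      chore_instanceD(3)[OF ci i]
    by (intro member_le_sum) auto
  also have "\<dots> \<le> 0"
    using bundles[OF owner_mem(1)[OF P e]] \<open>\<mu> = 0\<close> by simp
  finally show ?thesis
    using chore_instanceD(3)[OF ci i e] by simp
qed

lemma wmms_eq_if_exact_partition:
  assumes n: "0 < n" and w: "\<And>l. l < n \<Longrightarrow> 0 < w l" and Q: "allocation n m Q"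
    and exact: "\<And>l. l < n \<Longrightarrow> cost v k (Q l) = w l"
  shows "wmms n m w v k = w k"
proof -
  define F where "F A = Max ((\<lambda>j. cost v k (A j) / w j) ` {..<n})" for A
  have "F Q = 1"
  proof -
    have "(\<lambda>j. cost v k (Q j) / w j) ` {..<n} = {1}"
      using exact w n by force
    then show ?thesis unfolding F_def by simp
  qed
  moreover have "1 \<le> F A" if A: "allocation n m A" for A
  proof (rule ccontr)
    assume "\<not> 1 \<le> F A"
    moreover have "cost v k (A j) / w j \<le> F A" if "j < n" for j
      unfolding F_def using that by (intro Max_ge) auto
    ultimately have "cost v k (A j) / w j < 1" if "j < n" for j
      using that by force
    then have "cost v k (A j) < w j" if "j < n" for j
      using that w by (simp add: divide_less_eq)
    then have "(\<Sum>j<n. cost v k (A j)) < (\<Sum>j<n. cost v k (Q j))"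
      using n exact by (intro sum_strict_mono) auto
    then show False
      using sum_over_allocation[OF A, of "v k"] sum_over_allocation[OF Q, of "v k"]
      unfolding cost_def by simp
  qed
  ultimately have "Min (F ` allocations n m) = 1"
    using finite_allocations Q by (intro Min_eqI) (auto simp: allocations_def)
  then show ?thesis
    unfolding wmms_def F_def by simp
qed

lemma wmms_permute_agents:
  assumes \<pi>: "bij_betw \<pi> {..<n} {..<n}" and k: "k < n"
  shows "wmms n m (w \<circ> \<pi>) (v \<circ> \<pi>) k = wmms n m w v (\<pi> k)"
proof -
  define F where "F A = Max ((\<lambda>j. cost v (\<pi> k) (A j) / w j) ` {..<n})" for A
  define G where "G A = Max ((\<lambda>j. cost v (\<pi> k) (A j) / w (\<pi> j)) ` {..<n})" for A
  have \<pi>_onto: "\<pi> ` {..<n} = {..<n}"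
    using \<pi> by (simp add: bij_betw_def)
  have G_permute: "G (permute_agents n \<pi> B) = F B" for B
  proof -
    have "(\<lambda>j. cost v (\<pi> k) (permute_agents n \<pi> B j) / w (\<pi> j)) ` {..<n}
        = (\<lambda>j. cost v (\<pi> k) (B j) / w j) ` \<pi> ` {..<n}"
      unfolding image_image by (rule image_cong) (simp_all add: permute_agents_def)
    then show ?thesis
      unfolding F_def G_def \<pi>_onto by simp
  qed
  have "G ` allocations n m = F ` allocations n m"
  proof (intro equalityI subsetI)
    fix x assume "x \<in> F ` allocations n m"
    then obtain B where B: "allocation n m B" and x: "x = F B"
      by (auto simp: allocations_def)
    have "allocation n m (permute_agents n \<pi> B)"
      using \<pi> B by (rule allocation_permute_agents)
    then show "x \<in> G ` allocations n m"
      using x G_permute by (metis allocations_def image_eqI mem_Collect_eq)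
  next
    fix x assume "x \<in> G ` allocations n m"
    then obtain A where A: "allocation n m A" and x: "x = G A"
      by (auto simp: allocations_def)
    define B where "B = permute_agents n (inv_into {..<n} \<pi>) A"
    have "permute_agents n \<pi> B = A"
    proof
      fix j show "permute_agents n \<pi> B j = A j"
        using \<pi> allocation_empty_bundle[OF A, of j]
        by (cases "j < n") (auto simp: B_def permute_agents_def bij_betw_def)
    qed
    moreover have "allocation n m B"
      unfolding B_def using bij_betw_inv_into[OF \<pi>] A by (rule allocation_permute_agents)
    ultimately show "x \<in> F ` allocations n m"
      using x G_permute by (metis allocations_def image_eqI mem_Collect_eq)
  qed
  then show ?thesis
    unfolding wmms_def F_def G_def by (simp add: cost_def)
qed

lemma alpha_wmms_unpermute_agents:
  assumes \<pi>: "bij_betw \<pi> {..<n} {..<n}" and A: "is_alpha_wmms n m (w \<circ> \<pi>) (v \<circ> \<pi>) \<beta> A"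
  shows "is_alpha_wmms n m w v \<beta> (permute_agents n (inv_into {..<n} \<pi>) A)"
proof -
  let ?\<rho> = "inv_into {..<n} \<pi>"
  have \<rho>: "bij_betw ?\<rho> {..<n} {..<n}"
    using \<pi> by (rule bij_betw_inv_into)
  have "cost v i (permute_agents n ?\<rho> A i) \<le> \<beta> * wmms n m w v i" if i: "i < n" for i
  proof -
    have k: "?\<rho> i < n" and \<pi>\<rho>: "\<pi> (?\<rho> i) = i"
      using \<rho> \<pi> i by (auto simp: bij_betw_def f_inv_into_f)
    have "cost v i (permute_agents n ?\<rho> A i) = cost (v \<circ> \<pi>) (?\<rho> i) (A (?\<rho> i))"
      using i \<pi>\<rho> by (simp add: permute_agents_def cost_def)
    also have "\<dots> \<le> \<beta> * wmms n m (w \<circ> \<pi>) (v \<circ> \<pi>) (?\<rho> i)"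
      using A k by (simp add: is_alpha_wmms_def)
    also have "\<dots> = \<beta> * wmms n m w v i"
      using wmms_permute_agents[OF \<pi> k] \<pi>\<rho> by simp
    finally show ?thesis .
  qed
  then show ?thesis
    using allocation_permute_agents[OF \<rho>] A unfolding is_alpha_wmms_def by blast
qed

section \<open>Rank domination\<close>

lemma exists_sorting_permutation:
  fixes f :: "nat \<Rightarrow> 'a::linordered_ab_group_add"
  shows "\<exists>\<sigma>. bij_betw \<sigma> {..<N} {..<N} \<and> (\<forall>a b. a \<le> b \<longrightarrow> b < N \<longrightarrow> f (\<sigma> b) \<le> f (\<sigma> a))"
proof -
  define xs where "xs = sort_key (\<lambda>x. - f x) [0..<N]"
  have "distinct xs" "set xs = {..<N}" "length xs = N"
    unfolding xs_def by (auto simp: distinct_sort)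
  then have "bij_betw ((!) xs) {..<N} {..<N}"
    using bij_betw_nth by fastforce
  moreover have "sorted (map (\<lambda>x. - f x) xs)"
    unfolding xs_def by (rule sorted_sort_key)
  then have "f (xs ! b) \<le> f (xs ! a)" if "a \<le> b" "b < N" for a b
    using that sorted_nth_mono[of "map (\<lambda>x. - f x) xs" a b] \<open>length xs = N\<close> by simp
  ultimately show ?thesis
    by blast
qed

lemma greedy_matching:
  assumes "finite S" "card S = N"
    and "\<And>t R. t < N \<Longrightarrow> R \<subseteq> S \<Longrightarrow> card R = Suc t \<Longrightarrow> \<exists>e\<in>R. g t e"
  shows "\<exists>\<phi>. bij_betw \<phi> {..<N} S \<and> (\<forall>t<N. g t (\<phi> t))"
  using assms
proof (induction N arbitrary: S)
  case 0
  then show ?case by (simp add: bij_betw_def)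
next
  case (Suc N)
  obtain e where e: "e \<in> S" "g N e"
    using Suc.prems(3)[of N S] Suc.prems(2) by auto
  have "\<exists>e\<in>R. g t e" if "t < N" "R \<subseteq> S - {e}" "card R = Suc t" for t R
    using Suc.prems(3)[of t R] that by auto
  then obtain \<phi> where \<phi>: "bij_betw \<phi> {..<N} (S - {e})" "\<forall>t<N. g t (\<phi> t)"
    using Suc.IH[of "S - {e}"] Suc.prems e by auto
  have "bij_betw (\<phi>(N := e)) {..<Suc N} S"
  proof -
    have "bij_betw (\<phi>(N := e)) {..<N} (S - {e})"
      using \<phi>(1) by (rule bij_betw_cong[THEN iffD1, rotated]) auto
    moreover have "bij_betw (\<phi>(N := e)) {N} {e}"
      by simp
    ultimately have "bij_betw (\<phi>(N := e)) ({..<N} \<union> {N}) ((S - {e}) \<union> {e})"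
      by (rule bij_betw_combine) simp
    then show ?thesis
      using e by (simp add: lessThan_Suc insert_absorb)
  qed
  moreover have "\<forall>t<Suc N. g t ((\<phi>(N := e)) t)"
    using \<phi>(2) e by (auto simp: less_Suc_eq)
  ultimately show ?case by blast
qed

text \<open>\<open>W t\<close> bounds the \<open>(t+1)\<close>-st largest value of \<open>u\<close> on \<open>{..<M}\<close>.\<close>
definition rank_dominated :: "nat \<Rightarrow> (nat \<Rightarrow> real) \<Rightarrow> (nat \<Rightarrow> real) \<Rightarrow> bool" where
  "rank_dominated M u W \<longleftrightarrow>
     (\<forall>t<M. \<forall>R\<subseteq>{..<M}. card R = Suc t \<longrightarrow> (\<exists>e\<in>R. u e \<le> W t))"

lemma rank_dominated_sorted:
  assumes \<sigma>: "bij_betw \<sigma> {..<M} {..<M}"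
    and sorted: "\<And>a b. a \<le> b \<Longrightarrow> b < M \<Longrightarrow> y (\<sigma> b) \<le> y (\<sigma> a)"
  shows "rank_dominated M y (y \<circ> \<sigma>)"
  unfolding rank_dominated_def
proof (intro allI impI)
  fix t R assume t: "t < M" and R: "R \<subseteq> {..<M}" and card: "card R = Suc t"
  show "\<exists>e\<in>R. y e \<le> (y \<circ> \<sigma>) t"
  proof (rule ccontr)
    assume "\<not> ?thesis"
    then have above: "(y \<circ> \<sigma>) t < y e" if "e \<in> R" for e
      using that by force
    have "R \<subseteq> \<sigma> ` {..<t}"
    proof
      fix e assume e: "e \<in> R"
      then obtain s where s: "s < M" "e = \<sigma> s"
        using R \<sigma> unfolding bij_betw_def by auto
      then have "s < t"
        using above[OF e] sorted[of t s] by force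
      then show "e \<in> \<sigma> ` {..<t}"
        using s by auto
    qed
    then have "card R \<le> t"
      by (metis card_image_le card_lessThan card_mono finite_imageI finite_lessThan order_trans)
    then show False
      using card by simp
  qed
qed

lemma rank_dominated_scale:
  assumes "rank_dominated M y W" "0 \<le> c" "\<And>e. e < M \<Longrightarrow> u e \<le> c * y e"
  shows "rank_dominated M u (\<lambda>t. c * W t)"
  unfolding rank_dominated_def
proof (intro allI impI)
  fix t R assume "t < M" "R \<subseteq> {..<M}" "card R = Suc t"
  then obtain e where "e \<in> R" "y e \<le> W t"
    using assms(1) unfolding rank_dominated_def by blast
  then show "\<exists>e\<in>R. u e \<le> c * W t"
    using assms(2,3) \<open>R \<subseteq> {..<M}\<close> by (meson lessThan_iff mult_left_mono order_trans subsetD)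
qed

lemma rank_dominated_transfer:
  assumes A': "allocation n M A'" and dom: "\<And>k. k < n \<Longrightarrow> rank_dominated M (u k) (W k)"
  obtains A where "allocation n M A" "\<And>k. k < n \<Longrightarrow> cost u k (A k) \<le> cost W k (A' k)"
proof -
  let ?g = "\<lambda>t e. u (owner n A' t) e \<le> W (owner n A' t) t"
  have "\<exists>e\<in>R. ?g t e" if "t < M" "R \<subseteq> {..<M}" "card R = Suc t" for t R
    using dom[OF owner_mem(1)[OF A' \<open>t < M\<close>]] that unfolding rank_dominated_def by blast
  then obtain \<phi> where \<phi>: "bij_betw \<phi> {..<M} {..<M}" and g: "\<And>t. t < M \<Longrightarrow> ?g t (\<phi> t)"
    using greedy_matching[of "{..<M}" M ?g] by auto
  have "cost u k (\<phi> ` A' k) \<le> cost W k (A' k)" if k: "k < n" for k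
  proof -
    have "inj_on \<phi> (A' k)"
      using \<phi> allocation_bundle_subset[OF A'] by (meson bij_betw_def inj_on_subset)
    then have "cost u k (\<phi> ` A' k) = (\<Sum>t\<in>A' k. u k (\<phi> t))"
      unfolding cost_def by (simp add: sum.reindex)
    also have "\<dots> \<le> (\<Sum>t\<in>A' k. W k t)"
    proof (rule sum_mono)
      fix t assume t: "t \<in> A' k"
      then have "t < M" and "owner n A' t = k"
        using allocation_bundle_subset[OF A'] owner_eq[OF A' k] by auto
      then show "u k (\<phi> t) \<le> W k t"
        using g by metis
    qed
    finally show ?thesis
      unfolding cost_def .
  qed
  then show thesis
    using that allocation_image[OF \<phi> A'] by blast
qed

section \<open>Dyadic numbers\<close>

definition dyadic :: "real \<Rightarrow> real \<Rightarrow> bool" where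
  "dyadic c x \<longleftrightarrow> (\<exists>p::nat. x = c / 2 ^ p)"

lemma dyadic_bounds: "0 < c \<Longrightarrow> dyadic c x \<Longrightarrow> 0 < x \<and> x \<le> c"
  unfolding dyadic_def by (auto simp: divide_le_eq)

lemma dyadic_quotient:
  fixes c :: real
  assumes "0 < c" "p \<le> q"
  shows "(c / 2 ^ p) / (c / 2 ^ q) = 2 ^ (q - p)"
  using assms by (simp add: power_diff)

lemma dyadic_scale: "dyadic c x \<Longrightarrow> dyadic (c / s) (x / s)"
  unfolding dyadic_def by auto

lemma power2_Nats: "(2::real) ^ k \<in> \<nat>"
  by (metis of_nat_in_Nats of_nat_numeral of_nat_power)

lemma sum_in_Nats: "(\<And>x. x \<in> S \<Longrightarrow> f x \<in> \<nat>) \<Longrightarrow> sum f S \<in> \<nat>"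
  by (induction S rule: infinite_finite_induct) auto

lemma dyadic_common_unit:
  assumes "finite X" "0 < c" "\<And>x. x \<in> X \<Longrightarrow> x = 0 \<or> dyadic c x"
  obtains u where "0 < u" "dyadic c u" "\<And>x. x \<in> X \<Longrightarrow> x / u \<in> \<nat>"
proof -
  have "\<exists>u>0. dyadic c u \<and> (\<forall>x\<in>X. x / u \<in> \<nat>)"
    using assms(1,3)
  proof (induction X rule: finite_induct)
    case empty
    show ?case
      using assms(2) unfolding dyadic_def by (intro exI[of _ c]) (auto intro: exI[of _ 0])
  next
    case (insert x X)
    then obtain q where q: "\<forall>y\<in>X. y / (c / 2 ^ q) \<in> \<nat>"
      unfolding dyadic_def by auto
    show ?case
    proof (cases "x = 0")
      case True
      then show ?thesis
        using q assms(2) by (intro exI[of _ "c / 2 ^ q"]) (auto simp: dyadic_def)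
    next
      case False
      then obtain p where p: "x = c / 2 ^ p"
        using insert.prems unfolding dyadic_def by auto
      define u where "u = c / 2 ^ max p q"
      have "x / u \<in> \<nat>"
        unfolding p u_def dyadic_quotient[OF assms(2) max.cobounded1] by (rule power2_Nats)
      moreover have "y / u \<in> \<nat>" if "y \<in> X" for y
      proof -
        have "y / u = y / (c / 2 ^ q) * ((c / 2 ^ q) / u)"
          using assms(2) unfolding u_def by simp
        also have "\<dots> \<in> \<nat>"
          using q that unfolding u_def dyadic_quotient[OF assms(2) max.cobounded2]
          by (intro Nats_mult power2_Nats) simp
        finally show ?thesis .
      qed
      moreover have "0 < u" "dyadic c u"
        unfolding u_def dyadic_def using assms(2) by auto
      ultimately show ?thesis
        by blast
    qed
  qed
  then show thesis
    using that by blast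
qed

definition dyadic_ceiling :: "real \<Rightarrow> real \<Rightarrow> real" where
  "dyadic_ceiling c x = c / 2 ^ nat \<lfloor>log 2 (c / x)\<rfloor>"

lemma dyadic_dyadic_ceiling: "dyadic c (dyadic_ceiling c x)"
  unfolding dyadic_def dyadic_ceiling_def by blast

lemma dyadic_ceiling_bounds:
  assumes "0 < x" "x \<le> c"
  shows "x \<le> dyadic_ceiling c x" "dyadic_ceiling c x < 2 * x"
proof -
  define q where "q = nat \<lfloor>log 2 (c / x)\<rfloor>"
  have r: "1 \<le> c / x"
    using assms by simp
  have "2 ^ q \<le> c / x"
    unfolding q_def by (rule power_of_nat_log_le) (use r in auto)
  then show "x \<le> dyadic_ceiling c x"
    using assms unfolding dyadic_ceiling_def q_def[symmetric] by (simp add: field_simps)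
  have "log 2 (c / x) < q + 1"
    unfolding q_def using r by linarith
  then have "c / x < 2 powr real (q + 1)"
    using r by (simp add: log_less_iff)
  then have "c / x < 2 ^ (q + 1)"
    by (metis powr_realpow zero_less_numeral)
  then show "dyadic_ceiling c x < 2 * x"
    using assms unfolding dyadic_ceiling_def q_def[symmetric] by (simp add: field_simps)
qed

lemma dyadic_ceiling_mono:
  assumes "0 < x" "x \<le> x'" "x' \<le> c"
  shows "dyadic_ceiling c x \<le> dyadic_ceiling c x'"
proof -
  have "log 2 (c / x') \<le> log 2 (c / x)"
    using assms by (simp add: frac_le)
  then have "nat \<lfloor>log 2 (c / x')\<rfloor> \<le> nat \<lfloor>log 2 (c / x)\<rfloor>"
    by (intro nat_mono floor_mono)
  then show ?thesis
    unfolding dyadic_ceiling_def using assms by (intro divide_left_mono power_increasing) auto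
qed

lemma dyadic_ceiling_ratios:
  fixes w :: "nat \<Rightarrow> real"
  assumes pos: "\<And>k. k < n \<Longrightarrow> 0 < w k" and antitone: "\<And>a b. a \<le> b \<Longrightarrow> b < n \<Longrightarrow> w b \<le> w a"
  shows dyadic_ceiling_ratio_bounds: "\<And>k. k < n \<Longrightarrow>
           w k / w 0 \<le> dyadic_ceiling 1 (w k / w 0) \<and> dyadic_ceiling 1 (w k / w 0) \<le> 2 * (w k / w 0)"
    and dyadic_ceiling_ratio_antitone: "\<And>a b. a \<le> b \<Longrightarrow> b < n \<Longrightarrow>
           dyadic_ceiling 1 (w b / w 0) \<le> dyadic_ceiling 1 (w a / w 0)"
proof -
  have ratio: "0 < w k / w 0" "w k / w 0 \<le> 1" if "k < n" for k
  proof -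
    have "w k \<le> w 0"
      using antitone[of 0 k] that by simp
    then show "0 < w k / w 0" "w k / w 0 \<le> 1"
      using pos[of 0] pos[OF that] that by simp_all
  qed
  show "w k / w 0 \<le> dyadic_ceiling 1 (w k / w 0) \<and> dyadic_ceiling 1 (w k / w 0) \<le> 2 * (w k / w 0)"
    if "k < n" for k
    using dyadic_ceiling_bounds[OF ratio[OF that]] by simp
  show "dyadic_ceiling 1 (w b / w 0) \<le> dyadic_ceiling 1 (w a / w 0)" if "a \<le> b" "b < n" for a b
  proof -
    have "w b / w 0 \<le> w a / w 0"
      using antitone[OF that] pos[of 0] that by (simp add: divide_right_mono)
    then show ?thesis
      using ratio(1)[of b] ratio(2)[of a] that by (intro dyadic_ceiling_mono) auto
  qed
qed

lemma dyadic_weights: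
  fixes w :: "nat \<Rightarrow> real"
  assumes n: "0 < n" and pos: "\<And>k. k < n \<Longrightarrow> 0 < w k"
    and antitone: "\<And>a b. a \<le> b \<Longrightarrow> b < n \<Longrightarrow> w b \<le> w a"
  obtains w' K where "\<And>k. k < n \<Longrightarrow> 0 < w' k" "\<And>a b. a \<le> b \<Longrightarrow> b < n \<Longrightarrow> w' b \<le> w' a"
    "(\<Sum>k<n. w' k) = 1" "\<And>k. k < n \<Longrightarrow> dyadic (w' 0) (w' k)"
    "\<And>k. k < n \<Longrightarrow> K * w k \<le> w' k \<and> w' k \<le> 2 * K * w k"
proof -
  define d where "d k = dyadic_ceiling 1 (w k / w 0)" for k
  have d_bounds: "w k / w 0 \<le> d k \<and> d k \<le> 2 * (w k / w 0)" if "k < n" for k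
    unfolding d_def using pos antitone that by (rule dyadic_ceiling_ratio_bounds)
  have w0: "0 < w 0"
    using pos n by simp
  have d_pos: "0 < d k" if "k < n" for k
    using d_bounds[OF that] divide_pos_pos[OF pos[OF that] w0] by linarith
  have "d 0 = 1"
    unfolding d_def dyadic_ceiling_def using w0 by simp
  define Z where "Z = (\<Sum>k<n. d k)"
  have Z: "0 < Z"
    unfolding Z_def using n d_pos by (intro sum_pos) auto
  define w' where "w' k = d k / Z" for k
  define K where "K = 1 / (Z * w 0)"
  show thesis
  proof
    show "0 < w' k" if "k < n" for k
      unfolding w'_def using d_pos[OF that] Z by simp
    show "w' b \<le> w' a" if "a \<le> b" "b < n" for a b
    proof -
      have "d b \<le> d a"
        unfolding d_def using pos antitone that by (rule dyadic_ceiling_ratio_antitone)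
      then show ?thesis
        unfolding w'_def using Z by (simp add: divide_right_mono)
    qed
    have "(\<Sum>k<n. w' k) = Z / Z"
      unfolding w'_def Z_def by (rule sum_divide_distrib[symmetric])
    then show "(\<Sum>k<n. w' k) = 1"
      using Z by simp
    show "dyadic (w' 0) (w' k)" for k
      unfolding w'_def \<open>d 0 = 1\<close> unfolding d_def by (rule dyadic_scale[OF dyadic_dyadic_ceiling])
    show "K * w k \<le> w' k \<and> w' k \<le> 2 * K * w k" if "k < n" for k
    proof -
      have "K * w k = (w k / w 0) / Z" "2 * K * w k = 2 * (w k / w 0) / Z"
        unfolding K_def by simp_all
      moreover have "(w k / w 0) / Z \<le> w' k" "w' k \<le> 2 * (w k / w 0) / Z"
        unfolding w'_def using d_bounds[OF that] Z by (intro divide_right_mono; simp)+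
      ultimately show ?thesis
        by linarith
    qed
  qed
qed

section \<open>Exact dyadic partitions\<close>

lemma mem_block_iff:
  fixes L :: nat
  assumes "0 < L"
  shows "e \<in> (\<lambda>s. a + l * L + s) ` {..<L} \<longleftrightarrow> a \<le> e \<and> (e - a) div L = l"
proof
  assume "e \<in> (\<lambda>s. a + l * L + s) ` {..<L}"
  then obtain s where "s < L" "e = a + l * L + s"
    by auto
  then show "a \<le> e \<and> (e - a) div L = l"
    by simp
next
  assume e: "a \<le> e \<and> (e - a) div L = l"
  then have "e = a + l * L + (e - a) mod L"
    by (metis add.assoc div_mult_mod_eq le_add_diff_inverse)
  moreover have "(e - a) mod L < L"
    using assms by simp
  ultimately show "e \<in> (\<lambda>s. a + l * L + s) ` {..<L}"
    by (metis image_eqI lessThan_iff)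
qed

text \<open>The \<open>L\<close> items \<open>m + l * L + s\<close> with \<open>s < L\<close> form a new block that is added to bundle \<open>l\<close>.\<close>
definition block_extension :: "nat \<Rightarrow> nat \<Rightarrow> nat \<Rightarrow> (nat \<Rightarrow> nat set) \<Rightarrow> nat \<Rightarrow> nat set" where
  "block_extension n m L P =
     owner_allocation n (m + n * L) (\<lambda>e. if e < m then owner n P e else (e - m) div L)"

lemma allocation_block_extension:
  assumes P: "allocation n m P" and L: "0 < L"
  shows "allocation n (m + n * L) (block_extension n m L P)"
  unfolding block_extension_def
proof (rule allocation_owner_allocation)
  fix e assume e: "e < m + n * L"
  show "(if e < m then owner n P e else (e - m) div L) < n"
  proof (cases "e < m")
    case True
    then show ?thesis
      using owner_mem(1)[OF P] by simp
  next
    case False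
    then have "e - m < n * L"
      using e by simp
    then show ?thesis
      using False L by (simp add: div_less_iff_less_mult)
  qed
qed

lemma block_extension_bundle:
  assumes P: "allocation n m P" and L: "0 < L" and l: "l < n"
  shows "block_extension n m L P l = P l \<union> (\<lambda>s. m + l * L + s) ` {..<L}"
proof -
  let ?D = "(\<lambda>s. m + l * L + s) ` {..<L}"
  have "e \<in> block_extension n m L P l \<longleftrightarrow> e \<in> P l \<union> ?D" for e
  proof (cases "e < m")
    case True
    then have "e \<notin> ?D"
      by auto
    moreover have "owner n P e = l \<longleftrightarrow> e \<in> P l"
      using owner_mem[OF P True] owner_eq[OF P l] by auto
    ultimately show ?thesis
      using True l unfolding block_extension_def owner_allocation_def by auto
  next
    case False
    then have "e \<notin> P l"
      using allocation_bundle_subset[OF P] by auto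
    moreover have "e < m + n * L" if "e \<in> ?D"
    proof -
      obtain s where "s < L" "e = m + l * L + s"
        using \<open>e \<in> ?D\<close> by auto
      moreover have "l * L + L \<le> n * L"
        using l by (metis add.commute mult_Suc mult_le_mono1 Suc_leI)
      ultimately show ?thesis
        by linarith
    qed
    ultimately show ?thesis
      using False l mem_block_iff[OF L, of e m l] unfolding block_extension_def owner_allocation_def
      by auto
  qed
  then show ?thesis
    by blast
qed

lemma padded_costs:
  assumes P: "allocation n m P" and L: "0 < L" and cnt: "\<And>l. l < n \<Longrightarrow> cnt l \<le> L"
  obtains y' where "\<And>e. e < m \<Longrightarrow> y' e = y e" "\<And>e. m \<le> e \<Longrightarrow> y' e = 0 \<or> y' e = u"
    "\<And>l. l < n \<Longrightarrow> sum y' (block_extension n m L P l) = sum y (P l) + of_nat (cnt l) * u"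
proof -
  define y' where "y' e = (if e < m then y e else if (e - m) mod L < cnt ((e - m) div L) then u else 0)" for e
  have "y' e = y e" if "e < m" for e
    using that unfolding y'_def by simp
  moreover have "y' e = 0 \<or> y' e = u" if "m \<le> e" for e
    using that unfolding y'_def by simp
  moreover have "sum y' (block_extension n m L P l) = sum y (P l) + of_nat (cnt l) * u" if l: "l < n" for l
  proof -
    define D where "D = (\<lambda>s. m + l * L + s) ` {..<L}"
    have "P l \<inter> D = {}"
      using allocation_bundle_subset[OF P, of l] unfolding D_def by fastforce
    then have "sum y' (block_extension n m L P l) = sum y' (P l) + sum y' D"
      unfolding block_extension_bundle[OF P L l, folded D_def]
      using finite_allocation_bundle[OF P] D_def by (intro sum.union_disjoint) auto
    also have "sum y' (P l) = sum y (P l)"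
      using allocation_bundle_subset[OF P] unfolding y'_def by (intro sum.cong) auto
    also have "sum y' D = (\<Sum>s<L. if s < cnt l then u else 0)"
      unfolding D_def by (subst sum.reindex) (auto simp: inj_on_def y'_def intro!: sum.cong)
    also have "\<dots> = sum (\<lambda>_. u) ({..<L} \<inter> {..<cnt l})"
      by (simp only: sum.inter_restrict[OF finite_lessThan] lessThan_iff)
    also have "{..<L} \<inter> {..<cnt l} = {..<cnt l}"
      using cnt[OF l] by auto
    finally show ?thesis
      by simp
  qed
  ultimately show thesis
    by (rule that)
qed

definition dyadic_exact_partition ::
    "nat \<Rightarrow> nat \<Rightarrow> real \<Rightarrow> (nat \<Rightarrow> real) \<Rightarrow> (nat \<Rightarrow> real) \<Rightarrow> (nat \<Rightarrow> nat set) \<Rightarrow> bool" where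
  "dyadic_exact_partition n M c T y Q \<longleftrightarrow>
     (\<forall>e. y e = 0 \<or> dyadic c (y e)) \<and> allocation n M Q \<and> (\<forall>l<n. sum y (Q l) = T l)"

lemma dyadic_exact_partition_nonneg:
  "0 < c \<Longrightarrow> dyadic_exact_partition n M c T y Q \<Longrightarrow> 0 \<le> y e"
  unfolding dyadic_exact_partition_def using dyadic_bounds by (metis less_imp_le order_refl)

lemma dyadic_round_up_bundles:
  assumes c: "0 < c" and T: "\<And>l. l < n \<Longrightarrow> dyadic c (T l)" and P: "allocation n m P"
    and b: "\<And>e. e < m \<Longrightarrow> 0 \<le> b e" and half: "\<And>l. l < n \<Longrightarrow> sum b (P l) \<le> T l / 2"
  obtains y where "\<And>e. y e = 0 \<or> dyadic c (y e)" "\<And>e. e < m \<Longrightarrow> b e \<le> y e"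
    "\<And>l. l < n \<Longrightarrow> sum y (P l) \<le> T l"
proof -
  have b_le: "b e \<le> c" if e: "e < m" for e
  proof -
    let ?l = "owner n P e"
    have "b e \<le> sum b (P ?l)"
      using owner_mem[OF P e] allocation_bundle_subset[OF P, of ?l] b finite_allocation_bundle[OF P]
      by (intro member_le_sum) auto
    also have "\<dots> \<le> T ?l / 2"
      using half owner_mem(1)[OF P e] by simp
    also have "\<dots> \<le> c"
      using dyadic_bounds[OF c T[OF owner_mem(1)[OF P e]]] by simp
    finally show ?thesis .
  qed
  define y where "y e = (if e < m \<and> 0 < b e then dyadic_ceiling c (b e) else 0)" for e
  have y_bounds: "b e \<le> y e \<and> y e \<le> 2 * b e" if "e < m" for e
    using dyadic_ceiling_bounds[of "b e" c] b[OF that] b_le[OF that] that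
    unfolding y_def by auto
  show thesis
  proof (rule that)
    show "y e = 0 \<or> dyadic c (y e)" for e
      unfolding y_def using dyadic_dyadic_ceiling by simp
    show "b e \<le> y e" if "e < m" for e
      using y_bounds[OF that] by simp
    show "sum y (P l) \<le> T l" if "l < n" for l
    proof -
      have "sum y (P l) \<le> sum (\<lambda>e. 2 * b e) (P l)"
        using y_bounds allocation_bundle_subset[OF P, of l] by (intro sum_mono) auto
      also have "\<dots> \<le> T l"
        using half[OF that] by (simp add: sum_distrib_left[symmetric])
      finally show ?thesis .
    qed
  qed
qed

lemma dyadic_exact_extension:
  assumes c: "0 < c" and T: "\<And>l. l < n \<Longrightarrow> dyadic c (T l)" and P: "allocation n m P"
    and b: "\<And>e. e < m \<Longrightarrow> 0 \<le> b e" and half: "\<And>l. l < n \<Longrightarrow> sum b (P l) \<le> T l / 2"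
  shows "\<forall>\<^sub>F L in sequentially. \<exists>y Q. dyadic_exact_partition n (m + n * L) c T y Q \<and> (\<forall>e<m. b e \<le> y e)"
proof -
  obtain y0 where y0_dyadic: "\<And>e. y0 e = 0 \<or> dyadic c (y0 e)" and y0_above: "\<And>e. e < m \<Longrightarrow> b e \<le> y0 e"
    and y0_sum: "\<And>l. l < n \<Longrightarrow> sum y0 (P l) \<le> T l"
    using dyadic_round_up_bundles[OF c T P b half] by metis
  obtain u where u: "0 < u" "dyadic c u"
    and unit: "\<And>x. x \<in> y0 ` {..<m} \<union> T ` {..<n} \<Longrightarrow> x / u \<in> \<nat>"
    by (rule dyadic_common_unit[of "y0 ` {..<m} \<union> T ` {..<n}" c]) (use c y0_dyadic T in auto)
  have deficit: "(T l - sum y0 (P l)) / u \<in> \<nat>" if l: "l < n" for l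
  proof -
    have "sum y0 (P l) / u \<in> \<nat>"
      unfolding sum_divide_distrib
      using unit allocation_bundle_subset[OF P, of l] by (intro sum_in_Nats) auto
    moreover have "sum y0 (P l) / u \<le> T l / u"
      using y0_sum[OF l] u(1) by (simp add: divide_right_mono)
    ultimately have "T l / u - sum y0 (P l) / u \<in> \<nat>"
      using unit l by (intro Nats_diff) auto
    then show ?thesis
      by (simp add: diff_divide_distrib)
  qed
  define cnt where "cnt l = nat \<lfloor>(T l - sum y0 (P l)) / u\<rfloor>" for l
  have cnt: "(T l - sum y0 (P l)) / u = of_nat (cnt l)" if "l < n" for l
    using deficit[OF that] unfolding cnt_def by (auto elim!: Nats_cases)
  show ?thesis
  proof (rule eventually_sequentiallyI[of "Suc (\<Sum>l<n. cnt l)"])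
    fix L assume L: "Suc (\<Sum>l<n. cnt l) \<le> L"
    have "cnt l \<le> L" if "l < n" for l
      using L member_le_sum[of l "{..<n}" cnt] that by simp
    then obtain y where y_low: "\<And>e. e < m \<Longrightarrow> y e = y0 e"
      and y_high: "\<And>e. m \<le> e \<Longrightarrow> y e = 0 \<or> y e = u"
      and sums: "\<And>l. l < n \<Longrightarrow> sum y (block_extension n m L P l) = sum y0 (P l) + of_nat (cnt l) * u"
      using padded_costs[OF P, of L cnt y0 u] L by auto
    have "\<forall>e. y e = 0 \<or> dyadic c (y e)"
      using y_low y_high y0_dyadic u(2) by (metis not_less)
    moreover have "sum y (block_extension n m L P l) = T l" if "l < n" for l
      using sums[OF that] cnt[OF that] u(1) by (simp add: divide_eq_eq)
    ultimately have "dyadic_exact_partition n (m + n * L) c T y (block_extension n m L P)"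
      using allocation_block_extension[OF P] L unfolding dyadic_exact_partition_def by auto
    then show "\<exists>y Q. dyadic_exact_partition n (m + n * L) c T y Q \<and> (\<forall>e<m. b e \<le> y e)"
      using y_low y0_above by auto
  qed
qed

lemma sum_comp_inv_image:
  assumes \<sigma>: "bij_betw \<sigma> A A" and S: "S \<subseteq> A"
  shows "sum (y \<circ> \<sigma>) (inv_into A \<sigma> ` S) = sum y S"
proof -
  have "inj_on (inv_into A \<sigma>) S"
    using \<sigma> S by (meson bij_betw_imp_inj_on bij_betw_inv_into inj_on_subset)
  moreover have "\<sigma> (inv_into A \<sigma> e) = e" if "e \<in> S" for e
    using \<sigma> S that by (simp add: bij_betw_def f_inv_into_f subset_iff)
  ultimately show ?thesis
    by (simp add: sum.reindex)
qed

lemma canonical_of_dyadic_exact_partitions: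
  assumes n: "0 < n"
    and w_pos: "\<And>k. k < n \<Longrightarrow> 0 < w k" and w_antitone: "\<And>a b. a \<le> b \<Longrightarrow> b < n \<Longrightarrow> w b \<le> w a"
    and w_sum: "(\<Sum>k<n. w k) = 1" and w_dyadic: "\<And>k. k < n \<Longrightarrow> dyadic (w 0) (w k)"
    and partition: "\<And>k. k < n \<Longrightarrow> dyadic_exact_partition n M (w 0) w (y k) (Q k)"
    and \<sigma>: "\<And>k. k < n \<Longrightarrow> bij_betw (\<sigma> k) {..<M} {..<M}"
    and sorted: "\<And>k a b. k < n \<Longrightarrow> a \<le> b \<Longrightarrow> b < M \<Longrightarrow> y k (\<sigma> k b) \<le> y k (\<sigma> k a)"
  shows "canonical n M w (\<lambda>k. y k \<circ> \<sigma> k)"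
proof -
  let ?V = "\<lambda>k. y k \<circ> \<sigma> k"
  have y_dyadic: "y k e = 0 \<or> dyadic (w 0) (y k e)"
    and Q: "allocation n M (Q k)" and exact: "\<And>l. l < n \<Longrightarrow> sum (y k) (Q k l) = w l"
    if "k < n" for k e
    using partition[OF that] unfolding dyadic_exact_partition_def by auto
  define Q' where "Q' k l = inv_into {..<M} (\<sigma> k) ` Q k l" for k l
  have Q': "allocation n M (Q' k)" if "k < n" for k
    unfolding Q'_def using bij_betw_inv_into[OF \<sigma>[OF that]] Q[OF that] by (rule allocation_image)
  have exact': "cost ?V k (Q' k l) = w l" if "k < n" "l < n" for k l
    unfolding cost_def Q'_def
    using sum_comp_inv_image[OF \<sigma>[OF that(1)] allocation_bundle_subset[OF Q[OF that(1)]], of "y k"]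
      exact[OF that(1,2)]
    by simp
  have w0: "0 < w 0"
    using w_pos[OF n] .
  show ?thesis
    unfolding canonical_def chore_instance_def
  proof (intro conjI allI impI)
    show "1 \<le> n" "(\<Sum>k<n. w k) = 1"
      using n w_sum by simp_all
    show "0 < w k" if "k < n" for k
      using w_pos[OF that] .
    show "w j \<le> w i" if "i \<le> j \<and> j < n" for i j
      using w_antitone that by blast
    show "\<exists>p::nat. w k = w 0 / 2 ^ p" if "k < n" for k
      using w_dyadic[OF that] unfolding dyadic_def .
    show "?V k e = 0 \<or> (\<exists>p::nat. ?V k e = w 0 / 2 ^ p)" if "k < n" for k e
      using y_dyadic[OF that] unfolding dyadic_def by simp
    then show "0 \<le> ?V k e" if "k < n" for k e
      using that w0 by (metis divide_nonneg_pos order_refl less_imp_le zero_less_power zero_less_numeral)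
    show "?V k e' \<le> ?V k e" if "k < n" "e \<le> e' \<and> e' < M" for k e e'
      using sorted that by simp
    show "cost ?V k {..<M} = 1" if "k < n" for k
      using sum_over_allocation[OF Q'[OF that], of "?V k"] exact'[OF that] w_sum
      unfolding cost_def by simp
    show "wmms n M w ?V k = w k" if "k < n" for k
      using n w_pos Q'[OF that] exact'[OF that] by (rule wmms_eq_if_exact_partition)
  qed
qed

lemma sorted_canonical_of_dyadic_exact_partitions:
  assumes n: "0 < n"
    and w_pos: "\<And>k. k < n \<Longrightarrow> 0 < w k" and w_antitone: "\<And>a b. a \<le> b \<Longrightarrow> b < n \<Longrightarrow> w b \<le> w a"
    and w_sum: "(\<Sum>k<n. w k) = 1" and w_dyadic: "\<And>k. k < n \<Longrightarrow> dyadic (w 0) (w k)"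
    and partition: "\<And>k. k < n \<Longrightarrow> dyadic_exact_partition n M (w 0) w (y k) (Q k)"
  obtains V where "canonical n M w V" "\<And>k. k < n \<Longrightarrow> rank_dominated M (y k) (V k)"
proof -
  have "\<forall>k. \<exists>\<sigma>. bij_betw \<sigma> {..<M} {..<M} \<and> (\<forall>a b. a \<le> b \<longrightarrow> b < M \<longrightarrow> y k (\<sigma> b) \<le> y k (\<sigma> a))"
    using exists_sorting_permutation by blast
  then obtain \<sigma> where "\<forall>k. bij_betw (\<sigma> k) {..<M} {..<M}
      \<and> (\<forall>a b. a \<le> b \<longrightarrow> b < M \<longrightarrow> y k (\<sigma> k b) \<le> y k (\<sigma> k a))"
    by (rule choice[THEN exE])
  then have \<sigma>: "\<And>k. bij_betw (\<sigma> k) {..<M} {..<M}"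
    and sorted: "\<And>k a b. a \<le> b \<Longrightarrow> b < M \<Longrightarrow> y k (\<sigma> k b) \<le> y k (\<sigma> k a)"
    by auto
  have "canonical n M w (\<lambda>k. y k \<circ> \<sigma> k)"
    using n w_pos w_antitone w_sum w_dyadic partition \<sigma> sorted
    by (rule canonical_of_dyadic_exact_partitions)
  moreover have "rank_dominated M (y k) (y k \<circ> \<sigma> k)" for k
    using \<sigma> sorted by (rule rank_dominated_sorted)
  ultimately show thesis
    using that by blast
qed

section \<open>The reduction\<close>

text \<open>If the WMMS of agent \<open>i\<close> is \<open>0\<close>, the rescaled costs are \<open>0\<close> because \<open>x / 0 = 0\<close>.\<close>
lemma rescaled_wmms_partition:
  assumes ci: "chore_instance n m w v" and i: "i < n" and w': "\<And>k. k < n \<Longrightarrow> 0 < w' k"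
    and K: "\<And>k. k < n \<Longrightarrow> K * w k \<le> w' k \<and> w' k \<le> 2 * K * w k"
  obtains P where "allocation n m P"
    "\<And>l. l < n \<Longrightarrow> (\<Sum>e\<in>P l. w' i * v i e / (4 * wmms n m w v i)) \<le> w' l / 2"
proof -
  let ?W = "wmms n m w v i"
  obtain \<mu> P where \<mu>: "?W = w i * \<mu>" "0 \<le> \<mu>" and P: "allocation n m P"
    and bundles: "\<And>j. j < n \<Longrightarrow> cost v i (P j) \<le> \<mu> * w j"
    using wmms_attained[OF ci i] by metis
  have w: "\<And>j. j < n \<Longrightarrow> 0 < w j"
    using chore_instanceD(2)[OF ci] .
  have "(\<Sum>e\<in>P l. w' i * v i e / (4 * ?W)) \<le> w' l / 2" if l: "l < n" for l
  proof (cases "?W = 0")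
    case True
    then show ?thesis
      using w'[OF l] by simp
  next
    case False
    then have W: "0 < ?W" "0 < \<mu>"
      using \<mu> w[OF i] by (auto simp: zero_less_mult_iff)
    have "(\<Sum>e\<in>P l. w' i * v i e / (4 * ?W)) = w' i * cost v i (P l) / (4 * ?W)"
      unfolding cost_def by (simp add: sum_divide_distrib sum_distrib_left)
    also have "\<dots> \<le> w' i * (\<mu> * w l) / (4 * ?W)"
      using bundles[OF l] w'[OF i] W by (intro divide_right_mono mult_left_mono) auto
    also have "\<dots> = w' i * w l / (4 * w i)"
      using \<mu>(1) W by simp
    also have "\<dots> \<le> (2 * K * w i) * w l / (4 * w i)"
      using K[OF i] w[OF i] w[OF l] by (intro divide_right_mono mult_right_mono) auto
    also have "\<dots> = K * w l / 2"
      using w[OF i] by simp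
    also have "\<dots> \<le> w' l / 2"
      using K[OF l] by simp
    finally show ?thesis .
  qed
  then show thesis
    using that P by blast
qed

lemma eventually_dominating_dyadic_partition:
  assumes ci: "chore_instance n m w v" and i: "i < n" and w': "\<And>k. k < n \<Longrightarrow> 0 < w' k"
    and w'_dyadic: "\<And>k. k < n \<Longrightarrow> dyadic (w' 0) (w' k)"
    and K: "\<And>k. k < n \<Longrightarrow> K * w k \<le> w' k \<and> w' k \<le> 2 * K * w k"
  shows "\<forall>\<^sub>F L in sequentially. \<exists>y Q. dyadic_exact_partition n (m + n * L) (w' 0) w' y Q
           \<and> (\<forall>e<m. w' i * v i e \<le> 4 * wmms n m w v i * y e)"
proof -
  let ?W = "wmms n m w v i"
  define b where "b e = w' i * v i e / (4 * ?W)" for e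
  obtain P where P: "allocation n m P" and half: "\<And>l. l < n \<Longrightarrow> sum b (P l) \<le> w' l / 2"
    unfolding b_def using rescaled_wmms_partition[OF ci i w' K] by blast
  have b: "0 \<le> b e" if "e < m" for e
    unfolding b_def using w'[OF i] chore_instanceD(3)[OF ci i that] wmms_nonneg[OF ci i] by simp
  have "\<forall>\<^sub>F L in sequentially. \<exists>y Q. dyadic_exact_partition n (m + n * L) (w' 0) w' y Q \<and> (\<forall>e<m. b e \<le> y e)"
    using w'[OF chore_instanceD(1)[OF ci]] w'_dyadic P b half by (rule dyadic_exact_extension)
  then show ?thesis
  proof (rule eventually_mono)
    fix L assume "\<exists>y Q. dyadic_exact_partition n (m + n * L) (w' 0) w' y Q \<and> (\<forall>e<m. b e \<le> y e)"
    then obtain y Q where yQ: "dyadic_exact_partition n (m + n * L) (w' 0) w' y Q"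
      and b_le_y: "\<forall>e<m. b e \<le> y e"
      by blast
    have "w' i * v i e \<le> 4 * ?W * y e" if e: "e < m" for e
    proof (cases "?W = 0")
      case True
      then show ?thesis
        using item_cost_zero_if_wmms_zero[OF ci i True e] by simp
    next
      case False
      then have "w' i * v i e = 4 * ?W * b e"
        unfolding b_def by simp
      also have "\<dots> \<le> 4 * ?W * y e"
        using b_le_y e wmms_nonneg[OF ci i] by (intro mult_left_mono) auto
      finally show ?thesis .
    qed
    then show "\<exists>y Q. dyadic_exact_partition n (m + n * L) (w' 0) w' y Q
        \<and> (\<forall>e<m. w' i * v i e \<le> 4 * ?W * y e)"
      using yQ by blast
  qed
qed

lemma dominating_canonical_instance:
  assumes ci: "chore_instance n m w v" and antitone: "\<And>a b. a \<le> b \<Longrightarrow> b < n \<Longrightarrow> w b \<le> w a"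
  obtains M w' V where "m \<le> M" "canonical n M w' V" "\<And>k. k < n \<Longrightarrow> 0 < w' k"
    "\<And>k. k < n \<Longrightarrow> rank_dominated M (\<lambda>e. if e < m then w' k * v k e else 0)
                                        (\<lambda>t. 4 * wmms n m w v k * V k t)"
proof -
  have n: "0 < n" and w_pos: "\<And>k. k < n \<Longrightarrow> 0 < w k"
    using chore_instanceD[OF ci] by auto
  obtain w' K where w'_pos: "\<And>k. k < n \<Longrightarrow> 0 < w' k"
    and w'_antitone: "\<And>a b. a \<le> b \<Longrightarrow> b < n \<Longrightarrow> w' b \<le> w' a"
    and w'_sum: "(\<Sum>k<n. w' k) = 1" and w'_dyadic: "\<And>k. k < n \<Longrightarrow> dyadic (w' 0) (w' k)"
    and K: "\<And>k. k < n \<Longrightarrow> K * w k \<le> w' k \<and> w' k \<le> 2 * K * w k"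
    using dyadic_weights[where w = w, OF n w_pos antitone] by blast
  let ?cover = "\<lambda>L k. \<exists>y Q. dyadic_exact_partition n (m + n * L) (w' 0) w' y Q
                  \<and> (\<forall>e<m. w' k * v k e \<le> 4 * wmms n m w v k * y e)"
  have "\<forall>\<^sub>F L in sequentially. \<forall>k\<in>{..<n}. ?cover L k"
    using eventually_dominating_dyadic_partition[OF ci _ w'_pos w'_dyadic K]
    by (intro eventually_ball_finite) auto
  then obtain L where "\<forall>k\<in>{..<n}. ?cover L k"
    unfolding eventually_sequentially by blast
  then obtain y where "\<forall>k\<in>{..<n}. \<exists>Q. dyadic_exact_partition n (m + n * L) (w' 0) w' (y k) Q
                  \<and> (\<forall>e<m. w' k * v k e \<le> 4 * wmms n m w v k * y k e)"
    by (rule bchoice[THEN exE])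
  then obtain Q where "\<forall>k\<in>{..<n}. dyadic_exact_partition n (m + n * L) (w' 0) w' (y k) (Q k)
                  \<and> (\<forall>e<m. w' k * v k e \<le> 4 * wmms n m w v k * y k e)"
    by (rule bchoice[THEN exE])
  then have partition: "\<And>k. k < n \<Longrightarrow> dyadic_exact_partition n (m + n * L) (w' 0) w' (y k) (Q k)"
    and cover: "\<And>k e. k < n \<Longrightarrow> e < m \<Longrightarrow> w' k * v k e \<le> 4 * wmms n m w v k * y k e"
    by auto
  obtain V where "canonical n (m + n * L) w' V" and dom: "\<And>k. k < n \<Longrightarrow> rank_dominated (m + n * L) (y k) (V k)"
    using sorted_canonical_of_dyadic_exact_partitions[where w = w' and y = y and Q = Q,
        OF n w'_pos w'_antitone w'_sum w'_dyadic partition]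
    by blast
  moreover have "rank_dominated (m + n * L) (\<lambda>e. if e < m then w' k * v k e else 0)
                   (\<lambda>t. 4 * wmms n m w v k * V k t)" if k: "k < n" for k
  proof (rule rank_dominated_scale)
    show "rank_dominated (m + n * L) (y k) (V k)"
      using dom[OF k] .
    show "0 \<le> 4 * wmms n m w v k"
      using wmms_nonneg[OF ci k] by simp
    show "(if e < m then w' k * v k e else 0) \<le> 4 * wmms n m w v k * y k e" for e
      using cover[OF k] wmms_nonneg[OF ci k]
        dyadic_exact_partition_nonneg[OF w'_pos[OF n] partition[OF k], of e]
      by simp
  qed
  ultimately show thesis
    using that[of "m + n * L" w' V] w'_pos by auto
qed

lemma four_alpha_wmms_sorted:
  assumes canonical_alpha: "\<forall>n m (w :: nat \<Rightarrow> real) (v :: nat \<Rightarrow> nat \<Rightarrow> real). canonical n m w v \<longrightarrow>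
           (\<exists>A. is_alpha_wmms n m w v \<alpha> A)"
    and ci: "chore_instance n m w v" and antitone: "\<And>a b. a \<le> b \<Longrightarrow> b < n \<Longrightarrow> w b \<le> w a"
  shows "\<exists>A. is_alpha_wmms n m w v (4 * \<alpha>) A"
proof -
  obtain M w' V where "m \<le> M" and can: "canonical n M w' V" and w'_pos: "\<And>k. k < n \<Longrightarrow> 0 < w' k"
    and dom: "\<And>k. k < n \<Longrightarrow> rank_dominated M (\<lambda>e. if e < m then w' k * v k e else 0)
                                             (\<lambda>t. 4 * wmms n m w v k * V k t)"
    using dominating_canonical_instance[OF ci antitone] by blast
  obtain A' where A': "is_alpha_wmms n M w' V \<alpha> A'"
    using canonical_alpha can by blast
  let ?u = "\<lambda>k e. if e < m then w' k * v k e else 0"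
  have "allocation n M A'"
    using A' unfolding is_alpha_wmms_def by simp
  then obtain A where A: "allocation n M A"
    and transfer: "\<And>k. k < n \<Longrightarrow> cost ?u k (A k) \<le> cost (\<lambda>k t. 4 * wmms n m w v k * V k t) k (A' k)"
    using rank_dominated_transfer[where u = ?u and W = "\<lambda>k t. 4 * wmms n m w v k * V k t"] dom
    by blast
  define B where "B j = A j \<inter> {..<m}" for j
  have B: "allocation n m B"
    unfolding B_def using A \<open>m \<le> M\<close> by (rule allocation_restrict)
  have "cost v k (B k) \<le> 4 * \<alpha> * wmms n m w v k" if k: "k < n" for k
  proof -
    have "w' k * cost v k (B k) = cost ?u k (B k)"
      unfolding cost_def B_def by (simp add: sum_distrib_left)
    also have "\<dots> \<le> cost ?u k (A k)"
      unfolding cost_def B_def using finite_allocation_bundle[OF A] chore_instanceD(3)[OF ci k] w'_pos[OF k]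
      by (intro sum_mono2) auto
    also have "\<dots> \<le> 4 * wmms n m w v k * cost V k (A' k)"
      using transfer[OF k] unfolding cost_def by (simp add: sum_distrib_left)
    also have "\<dots> \<le> 4 * wmms n m w v k * (\<alpha> * w' k)"
    proof -
      have "cost V k (A' k) \<le> \<alpha> * wmms n M w' V k"
        using A' k unfolding is_alpha_wmms_def by blast
      moreover have "wmms n M w' V k = w' k"
        using can k unfolding canonical_def by blast
      ultimately show ?thesis
        using wmms_nonneg[OF ci k] by (simp add: mult_left_mono)
    qed
    also have "\<dots> = w' k * (4 * \<alpha> * wmms n m w v k)"
      by (simp add: algebra_simps)
    finally show ?thesis
      using w'_pos[OF k] by (simp add: mult_le_cancel_left_pos)
  qed
  then show ?thesis
    using B unfolding is_alpha_wmms_def by blast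
qed

theorem theorem3p1:
  fixes \<alpha> :: real
  assumes "\<alpha> \<ge> 1"
    and "\<forall>n m (w :: nat \<Rightarrow> real) (v :: nat \<Rightarrow> nat \<Rightarrow> real). canonical n m w v \<longrightarrow>
           (\<exists>A. is_alpha_wmms n m w v \<alpha> A)"
  shows "\<forall>n m (w :: nat \<Rightarrow> real) (v :: nat \<Rightarrow> nat \<Rightarrow> real). chore_instance n m w v \<longrightarrow>
           (\<exists>A. is_alpha_wmms n m w v (4 * \<alpha>) A)"
proof (intro allI impI)
  \<comment> \<open>The reduction works for every \<open>\<alpha>\<close>.\<close>
  fix n m and w :: "nat \<Rightarrow> real" and v :: "nat \<Rightarrow> nat \<Rightarrow> real"
  assume ci: "chore_instance n m w v"
  obtain \<sigma> where \<sigma>: "bij_betw \<sigma> {..<n} {..<n}" and sorted: "\<And>a b. a \<le> b \<Longrightarrow> b < n \<Longrightarrow> w (\<sigma> b) \<le> w (\<sigma> a)"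
    using exists_sorting_permutation[of n w] by blast
  have "chore_instance n m (w \<circ> \<sigma>) (v \<circ> \<sigma>)"
    using ci \<sigma> unfolding chore_instance_def bij_betw_def by auto
  then obtain A where "is_alpha_wmms n m (w \<circ> \<sigma>) (v \<circ> \<sigma>) (4 * \<alpha>) A"
    using four_alpha_wmms_sorted[OF assms(2)] sorted by fastforce
  then show "\<exists>A. is_alpha_wmms n m w v (4 * \<alpha>) A"
    using alpha_wmms_unpermute_agents[OF \<sigma>] by blast
qed

end
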